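(* Let $V=\{1,\dots,n\}$, let $(\bar\Omega,\mathcal F,\mathbb P)$ be a probability space, and let $\sigma:\{0,1\}^n\times\bar\Omega\to\mathbb R$ be such that for every $\omega\in\bar\Omega$ the set function $X\mapsto\sigma(X,\omega)$ (identifying $X\subseteq V$ with its characteristic vector $x\in\{0,1\}^n$) is nondecreasing and submodular, and for each $x$ the random variable $\sigma(x)=\sigma(x,\cdot)$ is integrable. Let $\mathcal X\subseteq\{0,1\}^n$ and $\alpha\in(0,1]$. Fix $\bar x\in\{0,1\}^n$ with support $\bar X=\{j\in V:\bar x_j=1\}$. Then for every $x\in\mathcal X$ and every $\psi\in\mathbb R$ with $\psi\le \mathrm{CVaR}_\alpha(\sigma(x))$, we have $$\psi\le \mathrm{CVaR}_\alpha(\sigma(\bar x))+\sum_{j\in V\setminus\bar X}\big(\mathrm{CVaR}_1(\sigma(\bar x+\mathbf e_j))-\mathrm{CVaR}_\alpha(\sigma(\bar x))\big)x_j .$$ That is, this inequality is valid for the set $\{(x,\psi): x\in\mathcal X,\ \psi\le\mathrm{CVaR}_\alpha(\sigma(x))\}$.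
   Context: For a random variable $Y$ with finite expectation and $\alpha\in(0,1]$, the conditional value-at-risk is $\mathrm{CVaR}_\alpha(Y)=\max_{\eta\in\mathbb R}\{\eta-\frac1\alpha\mathbb E([\eta-Y]_+)\}$, where $[z]_+=\max(z,0)$; in particular $\mathrm{CVaR}_1(Y)=\mathbb E[Y]$. $\mathbf e_j$ denotes the $j$-th unit vector in $\mathbb R^n$. *)

theory Defs
  imports "HOL-Probability.Probability"
begin

text \<open>Conditional value-at-risk (lower-tail convention of the paper):
  CVaR_alpha(Y) = max over eta of eta - (1/alpha) E[(eta - Y)_+].\<close>
definition cvar :: "'a measure \<Rightarrow> real \<Rightarrow> ('a \<Rightarrow> real) \<Rightarrow> real" where
  "cvar M \<alpha> Y = (SUP \<eta>::real. \<eta> - (1 / \<alpha>) * (\<integral>\<omega>. max (\<eta> - Y \<omega>) 0 \<partial>M))"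

definition nondecreasing_on :: "'v set \<Rightarrow> ('v set \<Rightarrow> real) \<Rightarrow> bool" where
  "nondecreasing_on V f \<longleftrightarrow> (\<forall>X Y. X \<subseteq> Y \<and> Y \<subseteq> V \<longrightarrow> f X \<le> f Y)"

definition submodular_on :: "'v set \<Rightarrow> ('v set \<Rightarrow> real) \<Rightarrow> bool" where
  "submodular_on V f \<longleftrightarrow>
     (\<forall>X Y. X \<subseteq> V \<and> Y \<subseteq> V \<longrightarrow> f (X \<union> Y) + f (X \<inter> Y) \<le> f X + f Y)"

end

theory Submission
  imports Defs
begin

text \<open>Every term of the supremum defining CVaR is bounded by the expectation, so
  CVaR_alpha(Y) \<le> E[Y] for alpha \<le> 1, with equality for alpha = 1. Pointwise, monotonicity
  and submodularity give sigma(X) \<le> sigma(Xbar) + \<Sum>j\<in>X-Xbar (sigma(Xbar+j) - sigma(Xbar)).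
  Taking CVaR_alpha \<le> E on the left and expectations on the right, and then replacing E[sigma(Xbar)],
  which occurs with the nonpositive coefficient 1 - |X - Xbar|, by the smaller CVaR_alpha(sigma(Xbar))
  yields the inequality.\<close>

lemma cvar_objective_le_expectation:
  fixes Y :: "'a \<Rightarrow> real" and \<eta> \<alpha> :: real
  assumes "prob_space M" "integrable M Y" "0 < \<alpha>" "\<alpha> \<le> 1"
  shows "\<eta> - (1 / \<alpha>) * (\<integral>\<omega>. max (\<eta> - Y \<omega>) 0 \<partial>M) \<le> (\<integral>\<omega>. Y \<omega> \<partial>M)"
proof -
  interpret prob_space M by fact
  let ?I = "\<integral>\<omega>. max (\<eta> - Y \<omega>) 0 \<partial>M"
  have "0 \<le> ?I" by (rule Bochner_Integration.integral_nonneg) auto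
  then have "?I \<le> (1 / \<alpha>) * ?I"
    using assms(3,4) by (simp add: field_simps mult_left_le_one_le)
  moreover have "\<eta> - (\<integral>\<omega>. Y \<omega> \<partial>M) = (\<integral>\<omega>. \<eta> - Y \<omega> \<partial>M)"
    using assms(2) by (simp add: prob_space)
  moreover have "(\<integral>\<omega>. \<eta> - Y \<omega> \<partial>M) \<le> ?I"
    using assms(2) by (intro integral_mono) auto
  ultimately show ?thesis by linarith
qed

lemma bdd_above_cvar_objective:
  assumes "prob_space M" "integrable M Y" "0 < \<alpha>" "\<alpha> \<le> 1"
  shows "bdd_above (range (\<lambda>\<eta>::real. \<eta> - (1 / \<alpha>) * (\<integral>\<omega>. max (\<eta> - Y \<omega>) 0 \<partial>M)))"
  using cvar_objective_le_expectation[OF assms] by (intro bdd_aboveI2)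

lemma cvar_le_expectation:
  assumes "prob_space M" "integrable M Y" "0 < \<alpha>" "\<alpha> \<le> 1"
  shows "cvar M \<alpha> Y \<le> (\<integral>\<omega>. Y \<omega> \<partial>M)"
  unfolding cvar_def using cvar_objective_le_expectation[OF assms] by (intro cSUP_least) auto

lemma cvar_mono:
  assumes "prob_space M" "integrable M Y" "integrable M Z" "0 < \<alpha>" "\<alpha> \<le> 1"
    and "\<And>\<omega>. \<omega> \<in> space M \<Longrightarrow> Y \<omega> \<le> Z \<omega>"
  shows "cvar M \<alpha> Y \<le> cvar M \<alpha> Z"
  unfolding cvar_def
proof (rule cSUP_mono)
  show "bdd_above (range (\<lambda>\<eta>::real. \<eta> - (1 / \<alpha>) * (\<integral>\<omega>. max (\<eta> - Z \<omega>) 0 \<partial>M)))"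
    using bdd_above_cvar_objective[OF assms(1,3,4,5)] .
  fix \<eta> :: real
  interpret prob_space M by fact
  have "max (\<eta> - Z \<omega>) 0 \<le> max (\<eta> - Y \<omega>) 0" if "\<omega> \<in> space M" for \<omega>
    using assms(6)[OF that] by auto
  then have "(\<integral>\<omega>. max (\<eta> - Z \<omega>) 0 \<partial>M) \<le> (\<integral>\<omega>. max (\<eta> - Y \<omega>) 0 \<partial>M)"
    using assms(2,3) by (intro integral_mono) auto
  then have "\<eta> - (1 / \<alpha>) * (\<integral>\<omega>. max (\<eta> - Y \<omega>) 0 \<partial>M)
      \<le> \<eta> - (1 / \<alpha>) * (\<integral>\<omega>. max (\<eta> - Z \<omega>) 0 \<partial>M)"
    using assms(4) by (simp add: divide_right_mono)
  then show "\<exists>m\<in>UNIV. \<eta> - (1 / \<alpha>) * (\<integral>\<omega>. max (\<eta> - Y \<omega>) 0 \<partial>M)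
      \<le> m - (1 / \<alpha>) * (\<integral>\<omega>. max (m - Z \<omega>) 0 \<partial>M)"
    by blast
qed auto

text \<open>For alpha = 1 the objective at eta = i equals E[Y] - E[(Y - i)_+], and the correction
  term vanishes as i \<rightarrow> \<infinity> by dominated convergence.\<close>

lemma expectation_le_cvar_one:
  assumes "prob_space M" "integrable M Y"
  shows "(\<integral>\<omega>. Y \<omega> \<partial>M) \<le> cvar M 1 Y"
proof -
  interpret prob_space M by fact
  define s where "s = (\<lambda>i::nat. \<lambda>\<omega>. max (Y \<omega> - real i) 0)"
  have [measurable]: "Y \<in> borel_measurable M" using assms(2) by auto
  have s_integrable: "integrable M (s i)" for i
    unfolding s_def using assms(2) by auto
  have "(\<lambda>i. integral\<^sup>L M (s i)) \<longlonglongrightarrow> integral\<^sup>L M (\<lambda>_. 0)"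
  proof (rule integral_dominated_convergence[where w="\<lambda>\<omega>. \<bar>Y \<omega>\<bar>"])
    show "AE \<omega> in M. (\<lambda>i. s i \<omega>) \<longlonglongrightarrow> 0"
    proof (intro AE_I2 tendsto_eventually)
      fix \<omega>
      have "\<forall>i\<ge>nat \<lceil>Y \<omega>\<rceil>. s i \<omega> = 0"
        unfolding s_def by (smt (verit) of_nat_le_iff real_nat_ceiling_ge)
      then show "\<forall>\<^sub>F i in sequentially. s i \<omega> = 0"
        unfolding eventually_sequentially by blast
    qed
  qed (use assms(2) in \<open>auto simp: s_def max_def\<close>)
  then have "(\<lambda>i. (\<integral>\<omega>. Y \<omega> \<partial>M) - integral\<^sup>L M (s i)) \<longlonglongrightarrow> (\<integral>\<omega>. Y \<omega> \<partial>M) - 0"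
    by (intro tendsto_diff) auto
  moreover have "(\<integral>\<omega>. Y \<omega> \<partial>M) - integral\<^sup>L M (s i) \<le> cvar M 1 Y" for i
  proof -
    have "(\<lambda>\<omega>. max (real i - Y \<omega>) 0) = (\<lambda>\<omega>. (real i - Y \<omega>) + s i \<omega>)"
      unfolding s_def by (auto simp: max_def)
    then have "(\<integral>\<omega>. max (real i - Y \<omega>) 0 \<partial>M) = real i - (\<integral>\<omega>. Y \<omega> \<partial>M) + integral\<^sup>L M (s i)"
      using assms(2) s_integrable by (simp add: prob_space)
    moreover have "real i - (1 / 1) * (\<integral>\<omega>. max (real i - Y \<omega>) 0 \<partial>M) \<le> cvar M 1 Y"
      unfolding cvar_def using bdd_above_cvar_objective[OF assms, of 1] by (intro cSUP_upper) auto
    ultimately show ?thesis by simp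
  qed
  ultimately show ?thesis by (intro LIMSEQ_le_const2) auto
qed

lemma cvar_one_eq_expectation:
  assumes "prob_space M" "integrable M Y"
  shows "cvar M 1 Y = (\<integral>\<omega>. Y \<omega> \<partial>M)"
  using cvar_le_expectation[OF assms, of 1] expectation_le_cvar_one[OF assms] by simp

lemma cvar_le_cvar_add_marginal_cvars:
  fixes Y Z :: "'a \<Rightarrow> real" and Z' :: "'b \<Rightarrow> 'a \<Rightarrow> real"
  assumes "prob_space M" "0 < \<alpha>" "\<alpha> \<le> 1" "finite K"
    and "integrable M Y" "integrable M Z" "\<And>j. j \<in> K \<Longrightarrow> integrable M (Z' j)"
    and le: "\<And>\<omega>. \<omega> \<in> space M \<Longrightarrow> Y \<omega> \<le> Z \<omega> + (\<Sum>j\<in>K. Z' j \<omega> - Z \<omega>)"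
  shows "cvar M \<alpha> Y \<le> cvar M \<alpha> Z + (\<Sum>j\<in>K. cvar M 1 (Z' j) - cvar M \<alpha> Z)"
proof (cases "K = {}")
  case True
  then show ?thesis using cvar_mono[OF assms(1,5,6,2,3)] le by simp
next
  case False
  interpret prob_space M by fact
  let ?E = "\<lambda>W. \<integral>\<omega>. W \<omega> \<partial>M"
  have "cvar M \<alpha> Y \<le> ?E Y" using cvar_le_expectation assms by blast
  also have "\<dots> \<le> ?E (\<lambda>\<omega>. Z \<omega> + (\<Sum>j\<in>K. Z' j \<omega> - Z \<omega>))"
    using assms(5-7) le by (intro integral_mono) auto
  also have "\<dots> = (1 - real (card K)) * ?E Z + (\<Sum>j\<in>K. ?E (Z' j))"
    using assms(6,7) by (simp add: integral_sum sum_subtractf algebra_simps)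
  also have "\<dots> \<le> (1 - real (card K)) * cvar M \<alpha> Z + (\<Sum>j\<in>K. cvar M 1 (Z' j))"
  proof -
    have "1 \<le> real (card K)" using False assms(4) by (simp add: Suc_leI card_gt_0_iff)
    then have "(1 - real (card K)) * ?E Z \<le> (1 - real (card K)) * cvar M \<alpha> Z"
      using cvar_le_expectation[OF assms(1,6,2,3)] by (intro mult_left_mono_neg) auto
    moreover have "?E (Z' j) = cvar M 1 (Z' j)" if "j \<in> K" for j
      using cvar_one_eq_expectation[OF assms(1) assms(7)[OF that]] by simp
    ultimately show ?thesis by simp
  qed
  also have "\<dots> = cvar M \<alpha> Z + (\<Sum>j\<in>K. cvar M 1 (Z' j) - cvar M \<alpha> Z)"
    by (simp add: sum_subtractf algebra_simps)
  finally show ?thesis .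
qed

lemma submodular_on_union_le_marginal_sum:
  assumes "submodular_on V f" "X \<subseteq> V" "finite K" "K \<subseteq> V" "K \<inter> X = {}"
  shows "f (X \<union> K) \<le> f X + (\<Sum>j\<in>K. f (insert j X) - f X)"
  using assms(3-5)
proof (induction K rule: finite_induct)
  case empty
  then show ?case by simp
next
  case (insert j K)
  have "f ((X \<union> K) \<union> insert j X) + f ((X \<union> K) \<inter> insert j X) \<le> f (X \<union> K) + f (insert j X)"
    using assms(1)[unfolded submodular_on_def, rule_format, of "X \<union> K" "insert j X"]
      assms(2) insert.prems by auto
  moreover have "(X \<union> K) \<union> insert j X = X \<union> insert j K" "(X \<union> K) \<inter> insert j X = X"
    using insert.hyps(2) insert.prems by auto
  ultimately show ?case using insert by simp
qed

lemma nondecreasing_submodular_le_marginal_sum: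
  assumes "nondecreasing_on V f" "submodular_on V f" "finite V" "X \<subseteq> V" "Xb \<subseteq> V"
  shows "f X \<le> f Xb + (\<Sum>j\<in>X - Xb. f (insert j Xb) - f Xb)"
proof -
  have "f X \<le> f (Xb \<union> (X - Xb))"
    using assms(1,4,5) unfolding nondecreasing_on_def by auto
  also have "\<dots> \<le> f Xb + (\<Sum>j\<in>X - Xb. f (insert j Xb) - f Xb)"
    using assms by (intro submodular_on_union_le_marginal_sum) (auto intro: finite_subset)
  finally show ?thesis .
qed

theorem proposition1:
  fixes M :: "'a measure" and n :: nat
    and \<sigma> :: "nat set \<Rightarrow> 'a \<Rightarrow> real"
    and \<X> :: "nat set set" and \<alpha> :: real and Xbar :: "nat set"
  assumes "prob_space M"
    and "\<forall>\<omega>\<in>space M. nondecreasing_on {1..n} (\<lambda>X. \<sigma> X \<omega>)"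
    and "\<forall>\<omega>\<in>space M. submodular_on {1..n} (\<lambda>X. \<sigma> X \<omega>)"
    and "\<forall>X. X \<subseteq> {1..n} \<longrightarrow> integrable M (\<sigma> X)"
    and "\<X> \<subseteq> Pow {1..n}"
    and "0 < \<alpha>" and "\<alpha> \<le> 1"
    and "Xbar \<subseteq> {1..n}"
  shows "\<forall>X\<in>\<X>. \<forall>\<psi>::real. \<psi> \<le> cvar M \<alpha> (\<sigma> X) \<longrightarrow>
           \<psi> \<le> cvar M \<alpha> (\<sigma> Xbar)
                + (\<Sum>j\<in>{1..n} - Xbar.
                     (cvar M 1 (\<sigma> (insert j Xbar)) - cvar M \<alpha> (\<sigma> Xbar)) * (if j \<in> X then 1 else 0))"
proof (intro ballI allI impI)
  fix X \<psi>
  assume "X \<in> \<X>" and \<psi>: "\<psi> \<le> cvar M \<alpha> (\<sigma> X)"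
  then have X: "X \<subseteq> {1..n}" using assms(5) by auto
  let ?c = "\<lambda>j. cvar M 1 (\<sigma> (insert j Xbar)) - cvar M \<alpha> (\<sigma> Xbar)"
  have "cvar M \<alpha> (\<sigma> X) \<le> cvar M \<alpha> (\<sigma> Xbar) + (\<Sum>j\<in>X - Xbar. ?c j)"
  proof (rule cvar_le_cvar_add_marginal_cvars)
    show "\<sigma> X \<omega> \<le> \<sigma> Xbar \<omega> + (\<Sum>j\<in>X - Xbar. \<sigma> (insert j Xbar) \<omega> - \<sigma> Xbar \<omega>)"
      if "\<omega> \<in> space M" for \<omega>
      using that X assms(2,3,8) by (intro nondecreasing_submodular_le_marginal_sum) auto
  qed (use X assms in \<open>auto intro: finite_subset\<close>)
  moreover have "(\<Sum>j\<in>{1..n} - Xbar. ?c j * (if j \<in> X then 1 else 0))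
      = (\<Sum>j\<in>({1..n} - Xbar) \<inter> X. ?c j)"
    by (simp add: sum.inter_restrict if_distrib cong: if_cong)
  moreover have "({1..n} - Xbar) \<inter> X = X - Xbar" using X by auto
  ultimately show "\<psi> \<le> cvar M \<alpha> (\<sigma> Xbar) + (\<Sum>j\<in>{1..n} - Xbar. ?c j * (if j \<in> X then 1 else 0))"
    using \<psi> by simp
qed

end
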